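(* Let $u$ be a coherent utility on $L^0$ whose determining set $\mathcal{D}$ is $L^1$-closed and uniformly integrable, let $Y$ be a random variable or random vector, and let $X,W\in L^1_s(\mathcal{D})\cap L^1_s(\mathsf{E}(\mathcal{D}\mid Y))\cap L^1$. Then $$u^{fc}(X;Y;W)=\lim_{\varepsilon\downarrow0}\varepsilon^{-1}\big(u^f(W+\varepsilon X;Y)-u^f(W;Y)\big).$$
   Context: Let $(\Omega,\mathcal{F},\mathsf{P})$ be a probability space, $L^0$ the space of all real random variables, $L^1=L^1(\mathsf{P})$, and $\mathcal{P}$ the set of probability measures on $\mathcal{F}$ absolutely continuous with respect to $\mathsf{P}$; measures are identified with their densities. For $\mathsf{Q}\in\mathcal{P}$, $\mathsf{E}_\mathsf{Q}X:=\mathsf{E}_\mathsf{Q}X^+-\mathsf{E}_\mathsf{Q}X^-$ with the convention $\infty-\infty=-\infty$. A coherent utility on $L^0$ is a map $u:L^0\to[-\infty,\infty]$ of the form $u(X)=\inf_{\mathsf{Q}\in\mathcal{D}}\mathsf{E}_\mathsf{Q}X$ for a nonempty $\mathcal{D}\subseteq\mathcal{P}$; its determining set is the largest such set, $\{\mathsf{Q}\in\mathcal{P}:\mathsf{E}_\mathsf{Q}X\ge u(X)\ \forall X\in L^0\}$. For $\mathcal{C}\subseteq\mathcal{P}$, $L^1_s(\mathcal{C})=\{X\in L^0:\lim_{n\to\infty}\sup_{\mathsf{Q}\in\mathcal{C}}\mathsf{E}_\mathsf{Q}|X|I(|X|>n)=0\}$. For a random vector $Y$, $\mathsf{E}(\mathcal{D}\mid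 Y):=\{\mathsf{E}(Z\mid Y):Z\in\mathcal{D}\}$ and $u^f(X;Y):=\inf_{\mathsf{Q}\in\mathsf{E}(\mathcal{D}\mid Y)}\mathsf{E}_\mathsf{Q}X$. Extreme measures: $\mathcal{X}_{\mathsf{E}(\mathcal{D}\mid Y)}(W)=\{\mathsf{Q}\in\mathsf{E}(\mathcal{D}\mid Y):\mathsf{E}_\mathsf{Q}W=u^f(W;Y)\in(-\infty,\infty)\}$; factor utility contribution: $u^{fc}(X;Y;W)=\inf_{\mathsf{Q}\in\mathcal{X}_{\mathsf{E}(\mathcal{D}\mid Y)}(W)}\mathsf{E}_\mathsf{Q}X$. *)

theory Defs
  imports "HOL-Probability.Probability"
begin

text \<open>Probability measures absolutely continuous w.r.t. M, identified with their densities.\<close>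
definition dens :: "'a measure \<Rightarrow> ('a \<Rightarrow> real) set" where
  "dens M = {Z. Z \<in> borel_measurable M \<and> (AE x in M. 0 \<le> Z x) \<and> integrable M Z \<and> integral\<^sup>L M Z = 1}"

text \<open>E_Q X = E_Q X^+ - E_Q X^-, with the convention infinity - infinity = -infinity.\<close>
definition EQ :: "'a measure \<Rightarrow> ('a \<Rightarrow> real) \<Rightarrow> ('a \<Rightarrow> real) \<Rightarrow> ereal" where
  "EQ M Z X =
     (let p = (\<integral>\<^sup>+ x. ennreal (Z x * max (X x) 0) \<partial>M);
          n = (\<integral>\<^sup>+ x. ennreal (Z x * max (- X x) 0) \<partial>M)
      in if n = \<infinity> then - \<infinity> else enn2ereal p - enn2ereal n)"

definition coherent_utility :: "'a measure \<Rightarrow> (('a \<Rightarrow> real) \<Rightarrow> ereal) \<Rightarrow> bool" where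
  "coherent_utility M u \<longleftrightarrow>
     (\<exists>D0. D0 \<noteq> {} \<and> D0 \<subseteq> dens M \<and> (\<forall>X \<in> borel_measurable M. u X = (INF Q\<in>D0. EQ M Q X)))"

definition determining_set :: "'a measure \<Rightarrow> (('a \<Rightarrow> real) \<Rightarrow> ereal) \<Rightarrow> ('a \<Rightarrow> real) set" where
  "determining_set M u = {Q \<in> dens M. \<forall>X \<in> borel_measurable M. u X \<le> EQ M Q X}"

definition L1_closed :: "'a measure \<Rightarrow> ('a \<Rightarrow> real) set \<Rightarrow> bool" where
  "L1_closed M D \<longleftrightarrow>
     (\<forall>Zs Z. (\<forall>n. Zs n \<in> D) \<longrightarrow> integrable M Z \<longrightarrow>
        (\<lambda>n. \<integral>x. \<bar>Zs n x - Z x\<bar> \<partial>M) \<longlonglongrightarrow> 0 \<longrightarrow> Z \<in> D)"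

definition unif_integrable :: "'a measure \<Rightarrow> ('a \<Rightarrow> real) set \<Rightarrow> bool" where
  "unif_integrable M D \<longleftrightarrow>
     ((\<lambda>n::nat. SUP Z\<in>D. (\<integral>\<^sup>+ x. ennreal (\<bar>Z x\<bar> * indicator {x. \<bar>Z x\<bar> > real n} x) \<partial>M))
        \<longlonglongrightarrow> 0)"

definition L1s :: "'a measure \<Rightarrow> ('a \<Rightarrow> real) set \<Rightarrow> ('a \<Rightarrow> real) set" where
  "L1s M C = {X \<in> borel_measurable M.
     (\<lambda>n::nat. SUP Q\<in>C. EQ M Q (\<lambda>x. \<bar>X x\<bar> * indicator {x. \<bar>X x\<bar> > real n} x)) \<longlonglongrightarrow> 0}"

definition cond_set :: "'a measure \<Rightarrow> ('a \<Rightarrow> real) set \<Rightarrow> ('a \<Rightarrow> 'b::euclidean_space) \<Rightarrow> ('a \<Rightarrow> real) set" where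
  "cond_set M D Y = (\<lambda>Z. real_cond_exp M (vimage_algebra (space M) Y borel) Z) ` D"

definition uf :: "'a measure \<Rightarrow> ('a \<Rightarrow> real) set \<Rightarrow> ('a \<Rightarrow> real) \<Rightarrow> ('a \<Rightarrow> 'b::euclidean_space) \<Rightarrow> ereal" where
  "uf M D X Y = (INF Q\<in>cond_set M D Y. EQ M Q X)"

definition extreme_set :: "'a measure \<Rightarrow> ('a \<Rightarrow> real) set \<Rightarrow> ('a \<Rightarrow> 'b::euclidean_space) \<Rightarrow> ('a \<Rightarrow> real) \<Rightarrow> ('a \<Rightarrow> real) set" where
  "extreme_set M D Y W = {Q \<in> cond_set M D Y. EQ M Q W = uf M D W Y \<and> \<bar>uf M D W Y\<bar> \<noteq> \<infinity>}"

definition ufc :: "'a measure \<Rightarrow> ('a \<Rightarrow> real) set \<Rightarrow> ('a \<Rightarrow> real) \<Rightarrow> ('a \<Rightarrow> 'b::euclidean_space) \<Rightarrow> ('a \<Rightarrow> real) \<Rightarrow> ereal" where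
  "ufc M D X Y W = (INF Q\<in>extreme_set M D Y W. EQ M Q X)"

end

theory Submission
  imports Defs
begin

(* Write C = E(D | Y), g Q = E_Q W and h Q = E_Q X for Q in C. Then u^f(W + e X; Y) = inf_C (g + e h)
   and u^f(W; Y) = inf_C g, so the theorem is a Danskin-type formula for the right derivative of an
   infimum of affine functions of e. The difference quotient is at most h Q for every minimiser Q
   of g; the matching lower bound holds as soon as near-minimisers of g with small h can be replaced
   by exact ones, i.e. the image of C under (g, h) plus the nonnegative quadrant is closed.

   This closedness comes from a compactness property of the convex, L^1-closed, uniformly integrable
   set D, transported to C because conditional expectation is linear and an L^1 contraction: nested
   nonempty convex L^1-closed subsets of D have a common point. To find it, take near-minimisers of
   psi_energy Z = E psi(Z)^2 = E exp(-max Z 0) on the nested sets. As psi((a + b)/2)^2 = psi a * psi b,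
   the convexity gap psi_energy a + psi_energy b - 2 psi_energy((a + b)/2) is the squared L^2
   distance of psi a and psi b, so the near-minimisers form a Cauchy sequence for this distance;
   uniform integrability upgrades it to an L^1-Cauchy sequence, whose limit lies in every set. *)

section \<open>Completeness of L1\<close>

lemma AE_convergent_if_summable_L1_increments:
  fixes g :: "nat \<Rightarrow> 'a \<Rightarrow> real"
  assumes int: "\<And>k. integrable M (g k)"
    and summable: "summable (\<lambda>k. \<integral>x. \<bar>g (Suc k) x - g k x\<bar> \<partial>M)"
  shows "AE x in M. convergent (\<lambda>k. g k x)"
proof -
  have [measurable]: "\<And>k. g k \<in> borel_measurable M"
    using int by auto
  have "(\<integral>\<^sup>+x. (\<Sum>k. ennreal \<bar>g (Suc k) x - g k x\<bar>) \<partial>M) = (\<Sum>k. \<integral>\<^sup>+x. \<bar>g (Suc k) x - g k x\<bar> \<partial>M)"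
    by (intro nn_integral_suminf) auto
  also have "\<dots> = ennreal (\<Sum>k. \<integral>x. \<bar>g (Suc k) x - g k x\<bar> \<partial>M)"
    using int summable by (subst nn_integral_eq_integral) (auto intro!: suminf_ennreal2)
  finally have "(\<integral>\<^sup>+x. (\<Sum>k. ennreal \<bar>g (Suc k) x - g k x\<bar>) \<partial>M) \<noteq> \<infinity>"
    by simp
  then have "AE x in M. (\<Sum>k. ennreal \<bar>g (Suc k) x - g k x\<bar>) \<noteq> \<infinity>"
    by (rule nn_integral_PInf_AE[rotated]) measurable
  then show ?thesis
  proof eventually_elim
    case (elim x)
    then have "summable (\<lambda>k. \<bar>g (Suc k) x - g k x\<bar>)"
      by (intro summable_suminf_not_top) auto
    then have "convergent (\<lambda>n. \<Sum>k<n. g (Suc k) x - g k x)"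
      unfolding summable_iff_convergent[symmetric] by (rule summable_rabs_cancel)
    then have "convergent (\<lambda>n. g n x - g 0 x)"
      by (simp add: sum_lessThan_telescope[of "\<lambda>k. g k x"])
    then show ?case
      by (simp add: convergent_diff_const_right_iff)
  qed
qed

lemma nn_integral_abs_diff_limit_le:
  fixes g :: "nat \<Rightarrow> 'a \<Rightarrow> real"
  assumes lim: "AE x in M. (\<lambda>j. g j x) \<longlonglongrightarrow> G x"
    and bound: "\<And>j. k \<le> j \<Longrightarrow> (\<integral>\<^sup>+x. \<bar>g j x - f x\<bar> \<partial>M) \<le> b"
    and [measurable]: "\<And>j. g j \<in> borel_measurable M" "f \<in> borel_measurable M"
  shows "(\<integral>\<^sup>+x. \<bar>G x - f x\<bar> \<partial>M) \<le> b"
proof -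
  have "(\<integral>\<^sup>+x. \<bar>G x - f x\<bar> \<partial>M) = (\<integral>\<^sup>+x. liminf (\<lambda>j. ennreal \<bar>g j x - f x\<bar>) \<partial>M)"
    using lim by (intro nn_integral_cong_AE, eventually_elim)
      (intro lim_imp_Liminf[symmetric] tendsto_ennrealI tendsto_intros, auto)
  also have "\<dots> \<le> liminf (\<lambda>j. \<integral>\<^sup>+x. \<bar>g j x - f x\<bar> \<partial>M)"
    by (intro nn_integral_liminf) auto
  also have "\<dots> \<le> b"
    by (intro Liminf_le) (auto simp: eventually_sequentially intro!: exI[of _ k] bound)
  finally show ?thesis .
qed

lemma L1_fast_Cauchy_tendsto:
  fixes g :: "nat \<Rightarrow> 'a \<Rightarrow> real"
  assumes int: "\<And>k. integrable M (g k)"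
    and fast: "\<And>j k. k \<le> j \<Longrightarrow> (\<integral>x. \<bar>g j x - g k x\<bar> \<partial>M) \<le> (1/2)^k"
  shows "\<exists>G. integrable M G \<and> (\<lambda>k. \<integral>x. \<bar>g k x - G x\<bar> \<partial>M) \<longlonglongrightarrow> 0"
proof -
  have [measurable]: "\<And>k. g k \<in> borel_measurable M"
    using int by auto
  have nn_fast: "(\<integral>\<^sup>+x. \<bar>g j x - g k x\<bar> \<partial>M) \<le> ennreal ((1/2)^k)" if "k \<le> j" for j k
    using fast[OF that] int by (subst nn_integral_eq_integral) (auto intro: ennreal_leI)
  define G where "G x = lim (\<lambda>k. g k x)" for x
  have [measurable]: "G \<in> borel_measurable M"
    unfolding G_def by measurable
  have "summable (\<lambda>k. \<integral>x. \<bar>g (Suc k) x - g k x\<bar> \<partial>M)"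
    using fast by (intro summable_comparison_test[OF _ summable_geometric[of "1/2"]]) auto
  then have lim: "AE x in M. (\<lambda>k. g k x) \<longlonglongrightarrow> G x"
    using AE_convergent_if_summable_L1_increments[OF int] unfolding G_def
    by (auto simp: convergent_LIMSEQ_iff)
  have Fatou: "(\<integral>\<^sup>+x. \<bar>G x - g k x\<bar> \<partial>M) \<le> ennreal ((1/2)^k)" for k
    using lim nn_fast by (rule nn_integral_abs_diff_limit_le) measurable
  have int_diff: "integrable M (\<lambda>x. G x - g k x)" for k
    using Fatou[of k] by (intro integrableI_bounded) (auto simp: le_less_trans)
  have "integrable M (\<lambda>x. (G x - g 0 x) + g 0 x)"
    using int_diff int by (rule Bochner_Integration.integrable_add)
  then have "integrable M G"
    by simp
  moreover have "(\<lambda>k. \<integral>x. \<bar>g k x - G x\<bar> \<partial>M) \<longlonglongrightarrow> 0"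
  proof (rule tendsto_sandwich[of "\<lambda>_. 0" _ _ "\<lambda>k. (1/2)^k"])
    have "ennreal (\<integral>x. \<bar>g k x - G x\<bar> \<partial>M) \<le> ennreal ((1/2)^k)" for k
      using Fatou[of k] int_diff[of k] by (subst nn_integral_eq_integral[symmetric]) (auto simp: abs_minus_commute)
    then show "\<forall>\<^sub>F k in sequentially. (\<integral>x. \<bar>g k x - G x\<bar> \<partial>M) \<le> (1/2)^k"
      by simp
  qed (auto intro!: LIMSEQ_power_zero)
  ultimately show ?thesis
    by blast
qed

lemma L1_Cauchy_subseq_tendsto:
  fixes f :: "nat \<Rightarrow> 'a \<Rightarrow> real"
  assumes int: "\<And>n. integrable M (f n)"
    and Cauchy: "\<And>e. e > 0 \<Longrightarrow> \<exists>N. \<forall>m\<ge>N. \<forall>n\<ge>N. (\<integral>x. \<bar>f m x - f n x\<bar> \<partial>M) < e"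
  shows "\<exists>r G. strict_mono r \<and> integrable M G \<and> (\<lambda>k. \<integral>x. \<bar>f (r k) x - G x\<bar> \<partial>M) \<longlonglongrightarrow> 0"
proof -
  obtain N where N: "\<And>k m n. m \<ge> N k \<Longrightarrow> n \<ge> N k \<Longrightarrow> (\<integral>x. \<bar>f m x - f n x\<bar> \<partial>M) < (1/2)^k"
    using Cauchy[of "(1/2)^_"] by (metis zero_less_divide_1_iff zero_less_numeral zero_less_power)
  define r where "r k = k + (\<Sum>i\<le>k. N i)" for k
  have "strict_mono r" unfolding strict_mono_Suc_iff r_def by simp
  moreover have "N k \<le> r j" if "k \<le> j" for k j
    using that member_le_sum[of k "{..j}" N] unfolding r_def by simp
  then have "(\<integral>x. \<bar>f (r j) x - f (r k) x\<bar> \<partial>M) \<le> (1/2)^k" if "k \<le> j" for j k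
    using N that by (meson le_trans less_imp_le order_refl)
  ultimately show ?thesis
    using L1_fast_Cauchy_tendsto[of M "f \<circ> r"] int by auto
qed

section \<open>Nested convex closed sets of densities\<close>

lemma densD:
  assumes "Z \<in> dens M"
  shows "Z \<in> borel_measurable M" "AE x in M. 0 \<le> Z x" "integrable M Z" "integral\<^sup>L M Z = 1"
  using assms unfolding dens_def by auto

definition psi :: "real \<Rightarrow> real" where
  "psi a = exp (- max a 0 / 2)"

lemma psi_bounds: "0 < psi a" "psi a \<le> 1"
  unfolding psi_def by auto

lemma psi_midpoint_sq:
  assumes "0 \<le> a" "0 \<le> b"
  shows "(psi ((a + b) / 2))\<^sup>2 = psi a * psi b"
  using assms unfolding psi_def by (simp add: power2_eq_square flip: exp_add) (simp add: field_simps)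

lemma psi_diff_ge:
  assumes "0 \<le> a" "a \<le> b" "b \<le> k"
  shows "b - a \<le> 2 * exp (k/2) * (psi a - psi b)"
proof -
  have "(b - a) / 2 * exp (- k/2) \<le> (b - a) / 2 * exp (- b/2)"
    using assms by (intro mult_left_mono) auto
  also have "\<dots> \<le> (exp ((b - a)/2) - 1) * exp (- b/2)"
  proof (rule mult_right_mono)
    show "(b - a) / 2 \<le> exp ((b - a)/2) - 1"
      using exp_ge_add_one_self[of "(b - a)/2"] by linarith
  qed simp
  also have "\<dots> = psi a - psi b"
    using assms by (simp add: psi_def algebra_simps flip: exp_add) (simp add: field_simps)
  finally show ?thesis
    by (simp add: field_simps exp_minus)
qed

lemma abs_le_plus_sq_divide:
  fixes t \<delta> :: real
  assumes "\<delta> > 0"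
  shows "\<bar>t\<bar> \<le> \<delta> + t\<^sup>2 / \<delta>"
proof -
  have "\<bar>t\<bar> * \<delta> \<le> \<delta> * \<delta> + t\<^sup>2"
  proof (cases "\<bar>t\<bar> \<le> \<delta>")
    case True
    then show ?thesis
      using assms by (simp add: add_increasing2 mult_right_mono)
  next
    case False
    then have "\<bar>t\<bar> * \<delta> \<le> \<bar>t\<bar> * \<bar>t\<bar>"
      by (intro mult_left_mono) auto
    then show ?thesis
      by (simp add: power2_eq_square add_increasing)
  qed
  then show ?thesis
    using assms by (simp add: field_simps)
qed

lemma abs_diff_le_psi_diff:
  assumes "0 \<le> a" "0 \<le> b" "0 \<le> k" "0 < \<delta>"
  shows "\<bar>a - b\<bar> \<le> 2 * exp (k/2) * \<delta> + 2 * exp (k/2) / \<delta> * (psi a - psi b)\<^sup>2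
           + (if a > k then a else 0) + (if b > k then b else 0)"
proof (cases "a \<le> k \<and> b \<le> k")
  case True
  have "\<bar>a - b\<bar> \<le> 2 * exp (k/2) * \<bar>psi a - psi b\<bar>"
  proof (cases "a \<le> b")
    case True
    then have "\<bar>a - b\<bar> \<le> 2 * exp (k/2) * (psi a - psi b)"
      using psi_diff_ge[of a b k] \<open>a \<le> k \<and> b \<le> k\<close> assms by simp
    also have "\<dots> \<le> 2 * exp (k/2) * \<bar>psi a - psi b\<bar>"
      by (intro mult_left_mono) auto
    finally show ?thesis .
  next
    case False
    then have "\<bar>a - b\<bar> \<le> 2 * exp (k/2) * (psi b - psi a)"
      using psi_diff_ge[of b a k] \<open>a \<le> k \<and> b \<le> k\<close> assms by simp
    also have "\<dots> \<le> 2 * exp (k/2) * \<bar>psi a - psi b\<bar>"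
      by (intro mult_left_mono) auto
    finally show ?thesis .
  qed
  also have "\<dots> \<le> 2 * exp (k/2) * (\<delta> + (psi a - psi b)\<^sup>2 / \<delta>)"
    using abs_le_plus_sq_divide[OF assms(4)] by (intro mult_left_mono) auto
  finally show ?thesis
    using assms True by (simp add: algebra_simps)
next
  case False
  then have "\<bar>a - b\<bar> \<le> (if a > k then a else 0) + (if b > k then b else 0)"
    using assms by auto
  moreover have "0 \<le> 2 * exp (k/2) * \<delta> + 2 * exp (k/2) / \<delta> * (psi a - psi b)\<^sup>2"
    using assms by simp
  ultimately show ?thesis
    by linarith
qed

lemma borel_measurable_psi [measurable]: "psi \<in> borel_measurable borel"
  unfolding psi_def by measurable

lemma integrable_tail:
  fixes Z :: "'a \<Rightarrow> real"
  assumes "integrable M Z"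
  shows "integrable M (\<lambda>x. \<bar>Z x\<bar> * indicator {x. \<bar>Z x\<bar> > c} x)"
proof -
  have [measurable]: "Z \<in> borel_measurable M"
    using assms by auto
  show ?thesis
    by (rule Bochner_Integration.integrable_bound[OF integrable_abs[OF assms]]) (auto simp: indicator_def)
qed

lemma unif_integrable_tail_le:
  assumes "D \<subseteq> dens M" "unif_integrable M D" "\<eta> > 0"
  obtains n :: nat where "\<And>Z. Z \<in> D \<Longrightarrow> (\<integral>x. \<bar>Z x\<bar> * indicator {x. \<bar>Z x\<bar> > real n} x \<partial>M) \<le> \<eta>"
proof -
  obtain n where n: "(SUP Z\<in>D. (\<integral>\<^sup>+ x. ennreal (\<bar>Z x\<bar> * indicator {x. \<bar>Z x\<bar> > real n} x) \<partial>M)) < ennreal \<eta>"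
    using order_tendstoD(2)[OF assms(2)[unfolded unif_integrable_def], of "ennreal \<eta>"] assms(3)
    by (auto simp: eventually_sequentially)
  show ?thesis
  proof (rule that)
    fix Z assume "Z \<in> D"
    then have "ennreal (\<integral>x. \<bar>Z x\<bar> * indicator {x. \<bar>Z x\<bar> > real n} x \<partial>M)
        \<le> (SUP Z\<in>D. (\<integral>\<^sup>+ x. ennreal (\<bar>Z x\<bar> * indicator {x. \<bar>Z x\<bar> > real n} x) \<partial>M))"
      using assms(1) densD[of Z M]
      by (subst nn_integral_eq_integral[symmetric]) (auto intro!: SUP_upper integrable_tail)
    also note n
    finally show "(\<integral>x. \<bar>Z x\<bar> * indicator {x. \<bar>Z x\<bar> > real n} x \<partial>M) \<le> \<eta>"
      using assms(3) by (metis ennreal_le_iff less_imp_le)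
  qed
qed

definition psi_energy :: "'a measure \<Rightarrow> ('a \<Rightarrow> real) \<Rightarrow> real" where
  "psi_energy M Z = (\<integral>x. (psi (Z x))\<^sup>2 \<partial>M)"

definition midpoint_convex :: "('a \<Rightarrow> real) set \<Rightarrow> bool" where
  "midpoint_convex K \<longleftrightarrow> (\<forall>a\<in>K. \<forall>b\<in>K. (\<lambda>x. (a x + b x) / 2) \<in> K)"

context prob_space
begin

lemma integrable_psi_comp:
  assumes "f \<in> borel_measurable M"
  shows "integrable M (\<lambda>x. (psi (f x))\<^sup>2)"
  using assms abs_of_pos[OF psi_bounds(1)] psi_bounds(2)
  by (intro integrable_const_bound[where B=1]) (auto simp: abs_square_le_1)

lemma psi_energy_le_1:
  assumes "Z \<in> borel_measurable M"
  shows "psi_energy M Z \<le> 1"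
  unfolding psi_energy_def using assms psi_bounds
  by (intro integral_le_const integrable_psi_comp) (auto simp: abs_square_le_1 less_imp_le)

lemma integral_psi_diff_sq:
  assumes [measurable]: "a \<in> borel_measurable M" "b \<in> borel_measurable M"
    and "AE x in M. 0 \<le> a x" "AE x in M. 0 \<le> b x"
  shows "(\<integral>x. (psi (a x) - psi (b x))\<^sup>2 \<partial>M)
    = psi_energy M a + psi_energy M b - 2 * psi_energy M (\<lambda>x. (a x + b x) / 2)"
proof -
  have "(\<integral>x. (psi (a x) - psi (b x))\<^sup>2 \<partial>M)
      = (\<integral>x. (psi (a x))\<^sup>2 + (psi (b x))\<^sup>2 - 2 * (psi ((a x + b x) / 2))\<^sup>2 \<partial>M)"
    using assms(3,4)
    by (intro integral_cong_AE) (measurable, auto simp: psi_midpoint_sq power2_diff)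
  then show ?thesis
    unfolding psi_energy_def by (simp add: integrable_psi_comp)
qed

lemma L1_dist_le_psi_dist:
  assumes a: "a \<in> dens M" and b: "b \<in> dens M" and "0 \<le> k" "0 < \<delta>"
  shows "(\<integral>x. \<bar>a x - b x\<bar> \<partial>M) \<le> 2 * exp (k/2) * \<delta> + 2 * exp (k/2) / \<delta> * (\<integral>x. (psi (a x) - psi (b x))\<^sup>2 \<partial>M)
    + (\<integral>x. \<bar>a x\<bar> * indicator {x. \<bar>a x\<bar> > k} x \<partial>M) + (\<integral>x. \<bar>b x\<bar> * indicator {x. \<bar>b x\<bar> > k} x \<partial>M)"
proof -
  note [measurable] = densD(1)[OF a] densD(1)[OF b]
  define C1 where "C1 = 2 * exp (k/2) * \<delta>"
  define C2 where "C2 = 2 * exp (k/2) / \<delta>"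
  have "\<bar>psi s - psi t\<bar> \<le> 1" for s t
    using psi_bounds[of s] psi_bounds[of t] by linarith
  then have int_sq: "integrable M (\<lambda>x. (psi (a x) - psi (b x))\<^sup>2)"
    by (intro integrable_const_bound[where B=1]) (auto simp: abs_square_le_1)
  have int_tail: "integrable M (\<lambda>x. \<bar>a x\<bar> * indicator {x. \<bar>a x\<bar> > k} x)"
    "integrable M (\<lambda>x. \<bar>b x\<bar> * indicator {x. \<bar>b x\<bar> > k} x)"
    using densD(3)[OF a] densD(3)[OF b] by (auto intro: integrable_tail)
  have "(\<integral>x. \<bar>a x - b x\<bar> \<partial>M) \<le> (\<integral>x. C1 + C2 * (psi (a x) - psi (b x))\<^sup>2
      + \<bar>a x\<bar> * indicator {x. \<bar>a x\<bar> > k} x + \<bar>b x\<bar> * indicator {x. \<bar>b x\<bar> > k} x \<partial>M)"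
  proof (rule integral_mono_AE)
    show "AE x in M. \<bar>a x - b x\<bar> \<le> C1 + C2 * (psi (a x) - psi (b x))\<^sup>2
      + \<bar>a x\<bar> * indicator {x. \<bar>a x\<bar> > k} x + \<bar>b x\<bar> * indicator {x. \<bar>b x\<bar> > k} x"
      using densD(2)[OF a] densD(2)[OF b]
    proof eventually_elim
      case (elim x)
      then show ?case
        using abs_diff_le_psi_diff[of "a x" "b x" k \<delta>] assms(3,4) unfolding C1_def C2_def
        by (auto simp: indicator_def split: if_split_asm)
    qed
  qed (use densD(3)[OF a] densD(3)[OF b] int_sq int_tail in auto)
  also have "\<dots> = C1 + C2 * (\<integral>x. (psi (a x) - psi (b x))\<^sup>2 \<partial>M)
    + (\<integral>x. \<bar>a x\<bar> * indicator {x. \<bar>a x\<bar> > k} x \<partial>M) + (\<integral>x. \<bar>b x\<bar> * indicator {x. \<bar>b x\<bar> > k} x \<partial>M)"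
    using int_sq int_tail by (simp add: prob_space)
  finally show ?thesis
    unfolding C1_def C2_def .
qed

lemma L1_dist_small_if_psi_dist_small:
  assumes "D \<subseteq> dens M" "unif_integrable M D" "\<epsilon> > 0"
  obtains \<theta> where "\<theta> > 0"
    "\<And>a b. a \<in> D \<Longrightarrow> b \<in> D \<Longrightarrow> (\<integral>x. (psi (a x) - psi (b x))\<^sup>2 \<partial>M) < \<theta> \<Longrightarrow> (\<integral>x. \<bar>a x - b x\<bar> \<partial>M) < \<epsilon>"
proof -
  obtain n where tail: "\<And>Z. Z \<in> D \<Longrightarrow> (\<integral>x. \<bar>Z x\<bar> * indicator {x. \<bar>Z x\<bar> > real n} x \<partial>M) \<le> \<epsilon>/4"
    using unif_integrable_tail_le[OF assms(1,2), of "\<epsilon>/4"] assms(3) by auto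
  define c where "c = 2 * exp (real n / 2)"
  define \<delta> where "\<delta> = \<epsilon> / (4 * c)"
  have "c > 0" "\<delta> > 0"
    using assms(3) by (auto simp: c_def \<delta>_def)
  show ?thesis
  proof (rule that[of "\<epsilon> * \<delta> / (4 * c)"])
    show "\<epsilon> * \<delta> / (4 * c) > 0"
      using \<open>c > 0\<close> \<open>\<delta> > 0\<close> assms(3) by simp
    fix a b assume "a \<in> D" "b \<in> D" and small: "(\<integral>x. (psi (a x) - psi (b x))\<^sup>2 \<partial>M) < \<epsilon> * \<delta> / (4 * c)"
    have "c / \<delta> * (\<integral>x. (psi (a x) - psi (b x))\<^sup>2 \<partial>M) < c / \<delta> * (\<epsilon> * \<delta> / (4 * c))"
      using small \<open>c > 0\<close> \<open>\<delta> > 0\<close> by (intro mult_strict_left_mono) auto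
    moreover have "c / \<delta> * (\<epsilon> * \<delta> / (4 * c)) = \<epsilon> / 4" "c * \<delta> = \<epsilon> / 4"
      using \<open>c > 0\<close> \<open>\<delta> > 0\<close> by (auto simp: \<delta>_def)
    moreover have "(\<integral>x. \<bar>a x - b x\<bar> \<partial>M) \<le> c * \<delta> + c / \<delta> * (\<integral>x. (psi (a x) - psi (b x))\<^sup>2 \<partial>M)
      + (\<integral>x. \<bar>a x\<bar> * indicator {x. \<bar>a x\<bar> > real n} x \<partial>M) + (\<integral>x. \<bar>b x\<bar> * indicator {x. \<bar>b x\<bar> > real n} x \<partial>M)"
      unfolding c_def by (rule L1_dist_le_psi_dist) (use \<open>a \<in> D\<close> \<open>b \<in> D\<close> assms(1) \<open>\<delta> > 0\<close> in auto)
    ultimately show "(\<integral>x. \<bar>a x - b x\<bar> \<partial>M) < \<epsilon>"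
      using tail[OF \<open>a \<in> D\<close>] tail[OF \<open>b \<in> D\<close>] by linarith
  qed
qed

lemma psi_dist_near_minimizers_le:
  assumes K: "decseq K" "\<And>j. K j \<subseteq> dens M" "\<And>j. midpoint_convex (K j)"
    and Zs: "\<And>j. Zs j \<in> K j"
    and lower: "\<And>j Z. Z \<in> K j \<Longrightarrow> A j \<le> psi_energy M Z"
    and near_min: "\<And>j. psi_energy M (Zs j) \<le> A j + 1 / Suc j"
    and "j \<le> i"
  shows "(\<integral>x. (psi (Zs i x) - psi (Zs j x))\<^sup>2 \<partial>M) \<le> A i - A j + 2 / Suc j"
proof -
  have Zs_ij: "Zs i \<in> K j" "Zs j \<in> K j"
    using Zs decseqD[OF K(1) \<open>j \<le> i\<close>] by auto
  then have "A j \<le> psi_energy M (\<lambda>x. (Zs i x + Zs j x) / 2)"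
    using K(3) lower unfolding midpoint_convex_def by blast
  moreover have "1 / Suc i \<le> 1 / Suc j"
    using \<open>j \<le> i\<close> by (simp add: frac_le)
  moreover have "(\<integral>x. (psi (Zs i x) - psi (Zs j x))\<^sup>2 \<partial>M)
      = psi_energy M (Zs i) + psi_energy M (Zs j) - 2 * psi_energy M (\<lambda>x. (Zs i x + Zs j x) / 2)"
    using Zs_ij K(2) densD by (intro integral_psi_diff_sq) blast+
  ultimately show ?thesis
    using near_min[of i] near_min[of j] by linarith
qed

lemma near_minimizers_psi_Cauchy:
  assumes K: "decseq K" "\<And>j. K j \<subseteq> dens M" "\<And>j. midpoint_convex (K j)"
    and Zs: "\<And>j. Zs j \<in> K j"
    and near_min: "\<And>j. psi_energy M (Zs j) \<le> Inf (psi_energy M ` K j) + 1 / Suc j"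
    and "\<theta> > 0"
  shows "\<exists>N. \<forall>i j. N \<le> j \<longrightarrow> j \<le> i \<longrightarrow> (\<integral>x. (psi (Zs i x) - psi (Zs j x))\<^sup>2 \<partial>M) < \<theta>"
proof -
  define A where "A j = Inf (psi_energy M ` K j)" for j
  have bdd: "bdd_below (psi_energy M ` K j)" for j
    unfolding psi_energy_def by (intro bdd_belowI[where m=0]) auto
  have lower: "A j \<le> psi_energy M Z" if "Z \<in> K j" for Z j
    unfolding A_def using bdd that by (intro cInf_lower) auto
  have "incseq A"
    unfolding A_def
  proof (intro monoI cInf_superset_mono)
    fix m n :: nat assume "m \<le> n"
    show "psi_energy M ` K n \<subseteq> psi_energy M ` K m"
      using image_mono[OF decseqD[OF K(1) \<open>m \<le> n\<close>]] .
  qed (use Zs in blast, rule bdd)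
  moreover have "\<forall>j. A j \<le> 1"
    using lower[OF Zs] psi_energy_le_1 Zs K(2) densD(1) by (meson order_trans subsetD)
  ultimately obtain L where A_lim: "A \<longlonglongrightarrow> L" and A_le_L: "\<And>j. A j \<le> L"
    using incseq_convergent by blast
  have "(\<lambda>j. A j - 2 / Suc j) \<longlonglongrightarrow> L - 0"
    by (intro tendsto_diff A_lim LIMSEQ_Suc[OF lim_const_over_n])
  then obtain N where N: "\<And>j. N \<le> j \<Longrightarrow> L - \<theta> < A j - 2 / Suc j"
    using order_tendstoD(1)[of _ L sequentially "L - \<theta>"] \<open>\<theta> > 0\<close> by (auto simp: eventually_sequentially)
  have "(\<integral>x. (psi (Zs i x) - psi (Zs j x))\<^sup>2 \<partial>M) < \<theta>" if "N \<le> j" "j \<le> i" for i j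
    using psi_dist_near_minimizers_le[OF K Zs lower near_min[folded A_def] that(2)] A_le_L[of i] N[OF that(1)]
    by linarith
  then show ?thesis
    by blast
qed

lemma near_minimizers_L1_Cauchy:
  assumes D: "D \<subseteq> dens M" "unif_integrable M D"
    and K: "decseq K" "\<And>j. K j \<subseteq> D" "\<And>j. midpoint_convex (K j)"
    and Zs: "\<And>j. Zs j \<in> K j"
    and near_min: "\<And>j. psi_energy M (Zs j) \<le> Inf (psi_energy M ` K j) + 1 / Suc j"
    and "\<epsilon> > 0"
  shows "\<exists>N. \<forall>m\<ge>N. \<forall>n\<ge>N. (\<integral>x. \<bar>Zs m x - Zs n x\<bar> \<partial>M) < \<epsilon>"
proof -
  obtain \<theta> where "\<theta> > 0" and \<theta>: "\<And>a b. a \<in> D \<Longrightarrow> b \<in> D \<Longrightarrow>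
      (\<integral>x. (psi (a x) - psi (b x))\<^sup>2 \<partial>M) < \<theta> \<Longrightarrow> (\<integral>x. \<bar>a x - b x\<bar> \<partial>M) < \<epsilon>"
    using L1_dist_small_if_psi_dist_small[OF D \<open>\<epsilon> > 0\<close>] by blast
  have "K j \<subseteq> dens M" for j
    using K(2) D(1) by blast
  then obtain N where N: "\<And>i j. N \<le> j \<Longrightarrow> j \<le> i \<Longrightarrow> (\<integral>x. (psi (Zs i x) - psi (Zs j x))\<^sup>2 \<partial>M) < \<theta>"
    using near_minimizers_psi_Cauchy[OF K(1) _ K(3) Zs near_min \<open>\<theta> > 0\<close>] by blast
  have ZsD: "Zs j \<in> D" for j
    using Zs K(2) by blast
  have "(\<integral>x. \<bar>Zs m x - Zs n x\<bar> \<partial>M) < \<epsilon>" if "N \<le> m" "N \<le> n" for m n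
  proof (cases "n \<le> m")
    case True
    then show ?thesis
      using \<theta>[OF ZsD ZsD N] that by blast
  next
    case False
    then have "(\<integral>x. \<bar>Zs n x - Zs m x\<bar> \<partial>M) < \<epsilon>"
      using \<theta>[OF ZsD ZsD N] that by simp
    then show ?thesis
      by (simp add: abs_minus_commute)
  qed
  then show ?thesis
    by blast
qed

(* A weak-compactness property of D, proved without weak topologies. *)
lemma decreasing_convex_closed_Inter_nonempty:
  assumes D: "D \<subseteq> dens M" "L1_closed M D" "unif_integrable M D"
    and K: "decseq K" "\<And>j. K j \<subseteq> D" "\<And>j. K j \<noteq> {}" "\<And>j. midpoint_convex (K j)"
    and closed: "\<And>j Zs Z. (\<And>k. Zs k \<in> K j) \<Longrightarrow> Z \<in> D \<Longrightarrow> (\<lambda>k. \<integral>x. \<bar>Zs k x - Z x\<bar> \<partial>M) \<longlonglongrightarrow> 0 \<Longrightarrow> Z \<in> K j"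
  shows "\<exists>Z. \<forall>j. Z \<in> K j"
proof -
  have "\<exists>Z\<in>K j. psi_energy M Z \<le> Inf (psi_energy M ` K j) + 1 / Suc j" for j
    using cInf_lessD[of "psi_energy M ` K j" "Inf (psi_energy M ` K j) + 1 / Suc j"] K(3) by force
  then obtain Zs where Zs: "\<And>j. Zs j \<in> K j"
    and near_min: "\<And>j. psi_energy M (Zs j) \<le> Inf (psi_energy M ` K j) + 1 / Suc j"
    by metis
  have ZsD: "Zs k \<in> D" for k
    using Zs K(2) by blast
  then have "integrable M (Zs k)" for k
    using D(1) densD(3) by blast
  then obtain r G where r: "strict_mono r" and "integrable M G"
    and lim: "(\<lambda>k. \<integral>x. \<bar>Zs (r k) x - G x\<bar> \<partial>M) \<longlonglongrightarrow> 0"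
    using L1_Cauchy_subseq_tendsto near_minimizers_L1_Cauchy[OF D(1,3) K(1,2,4) Zs near_min] by blast
  then have "G \<in> D"
    using D(2)[unfolded L1_closed_def, rule_format, OF ZsD] by blast
  have "G \<in> K j" for j
  proof (rule closed[OF _ \<open>G \<in> D\<close>])
    show "Zs (r (k + j)) \<in> K j" for k
      using Zs decseqD[OF K(1) order.trans[OF le_add2 seq_suble[OF r]]] by blast
    show "(\<lambda>k. \<integral>x. \<bar>Zs (r (k + j)) x - G x\<bar> \<partial>M) \<longlonglongrightarrow> 0"
      using LIMSEQ_ignore_initial_segment[OF lim, of j] .
  qed
  then show ?thesis
    by blast
qed

lemma convex_lsc_le_attained:
  fixes f :: "('a \<Rightarrow> real) \<Rightarrow> real"
  assumes D: "D \<subseteq> dens M" "L1_closed M D" "unif_integrable M D" "midpoint_convex D"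
    and convex: "\<And>a b. a \<in> D \<Longrightarrow> b \<in> D \<Longrightarrow> f (\<lambda>x. (a x + b x) / 2) \<le> (f a + f b) / 2"
    and lsc: "\<And>Zs Z c. (\<And>k. Zs k \<in> D) \<Longrightarrow> Z \<in> D \<Longrightarrow> (\<lambda>k. \<integral>x. \<bar>Zs k x - Z x\<bar> \<partial>M) \<longlonglongrightarrow> 0
      \<Longrightarrow> (\<And>k. f (Zs k) \<le> c) \<Longrightarrow> f Z \<le> c"
    and approx: "\<And>\<epsilon>. \<epsilon> > 0 \<Longrightarrow> \<exists>Z\<in>D. f Z \<le> \<epsilon>"
  shows "\<exists>Z\<in>D. f Z \<le> 0"
proof -
  define K where "K n = {Z \<in> D. f Z \<le> 1 / Suc n}" for n
  have "\<exists>Z. \<forall>n. Z \<in> K n"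
  proof (rule decreasing_convex_closed_Inter_nonempty[OF D(1-3)])
    have "1 / Suc (Suc n) \<le> 1 / Suc n" for n
      by (simp add: frac_le)
    then show "decseq K"
      unfolding K_def by (intro decseq_SucI) (auto intro: order_trans)
    show "K n \<noteq> {}" for n
      using approx[of "1 / Suc n"] unfolding K_def by auto
    show "midpoint_convex (K n)" for n
      using D(4) convex unfolding K_def midpoint_convex_def by fastforce
  qed (auto simp: K_def intro: lsc)
  then obtain Z where "Z \<in> D" and "\<And>n. f Z \<le> 1 / Suc n"
    unfolding K_def by blast
  moreover have "f Z \<le> 0"
    using LIMSEQ_le_const[OF LIMSEQ_Suc[OF lim_const_over_n[of 1]]] \<open>\<And>n. f Z \<le> 1 / Suc n\<close> by auto
  ultimately show ?thesis
    by blast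
qed

end

section \<open>Expectations under densities\<close>

lemma EQ_nonneg:
  assumes "\<And>x. 0 \<le> f x"
  shows "EQ M Q f = enn2ereal (\<integral>\<^sup>+x. ennreal (Q x * f x) \<partial>M)"
proof -
  have "max (- f x) 0 = 0" "max (f x) 0 = f x" for x
    using assms[of x] by auto
  then show ?thesis
    unfolding EQ_def Let_def by (simp add: zero_ennreal.rep_eq)
qed

lemma EQ_eq_integral:
  assumes [measurable]: "Q \<in> borel_measurable M" "V \<in> borel_measurable M"
    and pos: "AE x in M. 0 \<le> Q x" and int: "integrable M (\<lambda>x. Q x * V x)"
  shows "EQ M Q V = ereal (\<integral>x. Q x * V x \<partial>M)"
proof -
  have int_pm: "integrable M (\<lambda>x. Q x * max (V x) 0)" "integrable M (\<lambda>x. Q x * max (- V x) 0)"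
    by (rule Bochner_Integration.integrable_bound[OF int]; auto simp: abs_mult intro!: mult_left_mono)+
  have nn: "(\<integral>\<^sup>+x. Q x * max (V x) 0 \<partial>M) = (\<integral>x. Q x * max (V x) 0 \<partial>M)"
    "(\<integral>\<^sup>+x. Q x * max (- V x) 0 \<partial>M) = (\<integral>x. Q x * max (- V x) 0 \<partial>M)"
    using pos by (intro nn_integral_eq_integral int_pm; auto)+
  have "(\<integral>x. Q x * max (V x) 0 \<partial>M) - (\<integral>x. Q x * max (- V x) 0 \<partial>M)
      = (\<integral>x. Q x * max (V x) 0 - Q x * max (- V x) 0 \<partial>M)"
    using int_pm by simp
  also have "\<dots> = (\<integral>x. Q x * V x \<partial>M)"
    by (intro Bochner_Integration.integral_cong refl) (auto simp: max_def algebra_simps)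
  finally show ?thesis
    unfolding EQ_def Let_def nn using pos by (simp add: integral_nonneg_AE eventually_mono)
qed

lemma integrable_if_EQ_nonneg_finite:
  assumes [measurable]: "Q \<in> borel_measurable M" "f \<in> borel_measurable M"
    and pos: "AE x in M. 0 \<le> Q x" and f: "\<And>x. 0 \<le> f x" and fin: "EQ M Q f < \<infinity>"
  shows "integrable M (\<lambda>x. Q x * f x)"
proof (rule integrableI_bounded)
  have "(\<integral>\<^sup>+x. ennreal (Q x * f x) \<partial>M) < \<infinity>"
    using fin EQ_nonneg[of f M Q] f by (cases "\<integral>\<^sup>+x. ennreal (Q x * f x) \<partial>M") auto
  then show "(\<integral>\<^sup>+x. ennreal (norm (Q x * f x)) \<partial>M) < \<infinity>"
    using pos f by (subst nn_integral_cong_AE[where v="\<lambda>x. ennreal (Q x * f x)"]) (auto simp: abs_mult)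
qed measurable

lemma ennreal_half_add:
  assumes "0 \<le> a" "0 \<le> b"
  shows "ennreal (1/2) * (ennreal a + ennreal b) = ennreal ((a + b) / 2)"
proof -
  have "ennreal (1/2) * ennreal (a + b) = ennreal (1/2 * (a + b))"
    using assms by (intro ennreal_mult[symmetric]) auto
  then show ?thesis
    using assms by simp
qed

lemma nn_integral_midpoint:
  assumes [measurable]: "Q1 \<in> borel_measurable M" "Q2 \<in> borel_measurable M" "m \<in> borel_measurable M"
    and pos: "AE x in M. 0 \<le> Q1 x" "AE x in M. 0 \<le> Q2 x" and "\<And>x. 0 \<le> m x"
  shows "(\<integral>\<^sup>+x. ennreal ((Q1 x + Q2 x) / 2 * m x) \<partial>M)
       = ennreal (1/2) * ((\<integral>\<^sup>+x. ennreal (Q1 x * m x) \<partial>M) + (\<integral>\<^sup>+x. ennreal (Q2 x * m x) \<partial>M))"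
proof -
  have "AE x in M. ennreal ((Q1 x + Q2 x) / 2 * m x) = ennreal (1/2) * (ennreal (Q1 x * m x) + ennreal (Q2 x * m x))"
    using pos
  proof eventually_elim
    case (elim x)
    have "(Q1 x + Q2 x) / 2 * m x = (Q1 x * m x + Q2 x * m x) / 2"
      by (simp add: algebra_simps)
    then show ?case
      using elim \<open>0 \<le> m x\<close> by (subst ennreal_half_add) auto
  qed
  then show ?thesis
    by (simp add: nn_integral_cong_AE nn_integral_cmult nn_integral_add)
qed

lemma EQ_midpoint_ge_min:
  assumes [measurable]: "Q1 \<in> borel_measurable M" "Q2 \<in> borel_measurable M" "X \<in> borel_measurable M"
    and pos: "AE x in M. 0 \<le> Q1 x" "AE x in M. 0 \<le> Q2 x"
  shows "min (EQ M Q1 X) (EQ M Q2 X) \<le> EQ M (\<lambda>x. (Q1 x + Q2 x) / 2) X"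
proof -
  define P where "P Q = (\<integral>\<^sup>+x. ennreal (Q x * max (X x) 0) \<partial>M)" for Q :: "'a \<Rightarrow> real"
  define N where "N Q = (\<integral>\<^sup>+x. ennreal (Q x * max (- X x) 0) \<partial>M)" for Q :: "'a \<Rightarrow> real"
  have EQ: "EQ M Q X = (if N Q = \<infinity> then - \<infinity> else enn2ereal (P Q) - enn2ereal (N Q))" for Q
    unfolding EQ_def Let_def P_def N_def ..
  have P_mid: "P (\<lambda>x. (Q1 x + Q2 x) / 2) = ennreal (1/2) * (P Q1 + P Q2)"
    and N_mid: "N (\<lambda>x. (Q1 x + Q2 x) / 2) = ennreal (1/2) * (N Q1 + N Q2)"
    unfolding P_def N_def by (rule nn_integral_midpoint; use pos in auto)+
  show ?thesis
  proof (cases "N Q1 = \<infinity> \<or> N Q2 = \<infinity>")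
    case True
    then show ?thesis
      unfolding EQ by (auto simp: min_def)
  next
    case False
    then obtain n1 n2 where n: "N Q1 = ennreal n1" "N Q2 = ennreal n2" "0 \<le> n1" "0 \<le> n2"
      by (cases "N Q1"; cases "N Q2") auto
    show ?thesis
    proof (cases "P Q1 = \<infinity> \<or> P Q2 = \<infinity>")
      case True
      then have "EQ M (\<lambda>x. (Q1 x + Q2 x) / 2) X = \<infinity>"
        unfolding EQ P_mid N_mid using n by (auto simp: ennreal_mult_eq_top_iff)
      then show ?thesis
        by simp
    next
      case False
      then obtain p1 p2 where p: "P Q1 = ennreal p1" "P Q2 = ennreal p2" "0 \<le> p1" "0 \<le> p2"
        by (cases "P Q1"; cases "P Q2") auto
      then have "EQ M (\<lambda>x. (Q1 x + Q2 x) / 2) X = ereal (((p1 - n1) + (p2 - n2)) / 2)"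
        unfolding EQ P_mid N_mid n p ennreal_half_add[OF n(3,4)] ennreal_half_add[OF p(3,4)]
        using n(3,4) by (simp add: field_simps)
      then show ?thesis
        unfolding EQ using n p by (simp add: min_def)
    qed
  qed
qed

lemma L1s_tail_le:
  assumes V: "V \<in> L1s M C" and C: "C \<subseteq> dens M" and "\<eta> > 0"
  obtains n :: nat
  where "\<And>Q. Q \<in> C \<Longrightarrow> integrable M (\<lambda>x. Q x * (\<bar>V x\<bar> * indicator {x. \<bar>V x\<bar> > real n} x))"
    and "\<And>Q. Q \<in> C \<Longrightarrow> (\<integral>x. Q x * (\<bar>V x\<bar> * indicator {x. \<bar>V x\<bar> > real n} x) \<partial>M) \<le> \<eta>"
proof -
  have [measurable]: "V \<in> borel_measurable M"
    using V unfolding L1s_def by auto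
  obtain n where n: "(SUP Q\<in>C. EQ M Q (\<lambda>x. \<bar>V x\<bar> * indicator {x. \<bar>V x\<bar> > real n} x)) < ereal \<eta>"
    using order_tendstoD(2)[OF V[unfolded L1s_def, THEN CollectD, THEN conjunct2], of "ereal \<eta>"] \<open>\<eta> > 0\<close>
    by (auto simp: eventually_sequentially)
  define f where "f x = \<bar>V x\<bar> * indicator {x. \<bar>V x\<bar> > real n} x" for x
  have [measurable]: "f \<in> borel_measurable M" and f_nonneg: "\<And>x. 0 \<le> f x"
    unfolding f_def by auto
  have EQ_lt: "EQ M Q f < ereal \<eta>" if "Q \<in> C" for Q
    using SUP_upper[OF that, of "\<lambda>Q. EQ M Q f"] n unfolding f_def by simp
  have int: "integrable M (\<lambda>x. Q x * f x)" if "Q \<in> C" for Q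
    using that C densD[of Q M] EQ_lt[OF that] f_nonneg
    by (intro integrable_if_EQ_nonneg_finite) (auto simp: less_le_trans)
  show ?thesis
  proof (rule that[of n])
    fix Q assume "Q \<in> C"
    then show "integrable M (\<lambda>x. Q x * (\<bar>V x\<bar> * indicator {x. \<bar>V x\<bar> > real n} x))"
      using int unfolding f_def by blast
    have "EQ M Q f = ereal (\<integral>x. Q x * f x \<partial>M)"
      using \<open>Q \<in> C\<close> C densD[of Q M] int by (intro EQ_eq_integral) auto
    then show "(\<integral>x. Q x * (\<bar>V x\<bar> * indicator {x. \<bar>V x\<bar> > real n} x) \<partial>M) \<le> \<eta>"
      using EQ_lt[OF \<open>Q \<in> C\<close>] unfolding f_def by simp
  qed
qed

lemma abs_mult_diff_le_truncation:
  fixes q1 q2 v :: real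
  assumes "0 \<le> q1" "0 \<le> q2" "0 \<le> c"
  shows "\<bar>q1 * v - q2 * v\<bar> \<le> c * \<bar>q1 - q2\<bar> + (q1 + q2) * (if \<bar>v\<bar> > c then \<bar>v\<bar> else 0)"
proof (cases "\<bar>v\<bar> > c")
  case True
  have "\<bar>q1 * v - q2 * v\<bar> = \<bar>q1 - q2\<bar> * \<bar>v\<bar>"
    by (simp add: abs_mult flip: left_diff_distrib)
  also have "\<dots> \<le> (q1 + q2) * \<bar>v\<bar>"
    using assms by (intro mult_right_mono) auto
  also have "\<dots> \<le> c * \<bar>q1 - q2\<bar> + (q1 + q2) * \<bar>v\<bar>"
    using assms by simp
  finally show ?thesis
    using True by simp
next
  case False
  have "\<bar>q1 * v - q2 * v\<bar> = \<bar>q1 - q2\<bar> * \<bar>v\<bar>"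
    by (simp add: abs_mult flip: left_diff_distrib)
  also have "\<dots> \<le> \<bar>q1 - q2\<bar> * c"
    using False by (intro mult_left_mono) auto
  finally show ?thesis
    using False by (simp add: algebra_simps)
qed

lemma integral_mult_diff_le_truncation:
  fixes c :: real
  assumes [measurable]: "V \<in> borel_measurable M" "Q1 \<in> borel_measurable M" "Q2 \<in> borel_measurable M"
    and pos: "AE x in M. 0 \<le> Q1 x" "AE x in M. 0 \<le> Q2 x" and int: "integrable M Q1" "integrable M Q2"
    and int_V: "integrable M (\<lambda>x. Q1 x * V x)" "integrable M (\<lambda>x. Q2 x * V x)" and "0 \<le> c"
  shows "\<bar>(\<integral>x. Q1 x * V x \<partial>M) - (\<integral>x. Q2 x * V x \<partial>M)\<bar>
    \<le> c * (\<integral>x. \<bar>Q1 x - Q2 x\<bar> \<partial>M) + (\<integral>x. Q1 x * (\<bar>V x\<bar> * indicator {x. \<bar>V x\<bar> > c} x) \<partial>M)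
      + (\<integral>x. Q2 x * (\<bar>V x\<bar> * indicator {x. \<bar>V x\<bar> > c} x) \<partial>M)"
proof -
  define t where "t x = \<bar>V x\<bar> * indicator {x. \<bar>V x\<bar> > c} x" for x
  have int_t: "integrable M (\<lambda>x. Q x * t x)"
    if [measurable]: "Q \<in> borel_measurable M" and "AE x in M. 0 \<le> Q x" "integrable M (\<lambda>x. Q x * V x)" for Q
    using that(3)
  proof (rule Bochner_Integration.integrable_bound)
    show "AE x in M. norm (Q x * t x) \<le> norm (Q x * V x)"
      using that(2) by eventually_elim (auto simp: t_def abs_mult indicator_def)
  qed (simp add: t_def)
  note int_t = int_t[OF _ pos(1) int_V(1)] int_t[OF _ pos(2) int_V(2)]
  have "\<bar>(\<integral>x. Q1 x * V x \<partial>M) - (\<integral>x. Q2 x * V x \<partial>M)\<bar> = \<bar>\<integral>x. Q1 x * V x - Q2 x * V x \<partial>M\<bar>"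
    using int_V by simp
  also have "\<dots> \<le> (\<integral>x. \<bar>Q1 x * V x - Q2 x * V x\<bar> \<partial>M)"
    by (rule integral_abs_bound)
  also have "\<dots> \<le> (\<integral>x. c * \<bar>Q1 x - Q2 x\<bar> + Q1 x * t x + Q2 x * t x \<partial>M)"
  proof (rule integral_mono_AE)
    show "AE x in M. \<bar>Q1 x * V x - Q2 x * V x\<bar> \<le> c * \<bar>Q1 x - Q2 x\<bar> + Q1 x * t x + Q2 x * t x"
      using pos
    proof eventually_elim
      case (elim x)
      then show ?case
        using abs_mult_diff_le_truncation[of "Q1 x" "Q2 x" c "V x"] \<open>0 \<le> c\<close>
        by (cases "\<bar>V x\<bar> > c") (simp_all add: t_def algebra_simps)
    qed
  qed (use int int_V int_t in auto)
  also have "\<dots> = c * (\<integral>x. \<bar>Q1 x - Q2 x\<bar> \<partial>M) + (\<integral>x. Q1 x * t x \<partial>M) + (\<integral>x. Q2 x * t x \<partial>M)"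
    using int int_t by simp
  finally show ?thesis
    unfolding t_def .
qed

lemma L1s_integrable:
  assumes V: "V \<in> L1s M C" and C: "C \<subseteq> dens M" and "Q \<in> C"
  shows "integrable M (\<lambda>x. Q x * V x)"
proof -
  have [measurable]: "V \<in> borel_measurable M"
    using V unfolding L1s_def by auto
  note Q = densD[of Q M, OF subsetD[OF C \<open>Q \<in> C\<close>]]
  obtain n :: nat
    where "\<And>Q. Q \<in> C \<Longrightarrow> integrable M (\<lambda>x. Q x * (\<bar>V x\<bar> * indicator {x. \<bar>V x\<bar> > real n} x))"
    using L1s_tail_le[OF V C zero_less_one] by blast
  then have "integrable M (\<lambda>x. real n * Q x + Q x * (\<bar>V x\<bar> * indicator {x. \<bar>V x\<bar> > real n} x))"
    using Q(3) \<open>Q \<in> C\<close> by auto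
  then show ?thesis
  proof (rule Bochner_Integration.integrable_bound)
    show "AE x in M. norm (Q x * V x) \<le> norm (real n * Q x + Q x * (\<bar>V x\<bar> * indicator {x. \<bar>V x\<bar> > real n} x))"
      using Q(2)
    proof eventually_elim
      case (elim x)
      then show ?case
        using abs_mult_diff_le_truncation[of "Q x" 0 "real n" "V x"]
        by (cases "\<bar>V x\<bar> > real n") (simp_all add: algebra_simps)
    qed
  qed (use Q(1) in measurable)
qed

lemma L1s_bdd_below:
  assumes V: "V \<in> L1s M C" and C: "C \<subseteq> dens M"
  shows "bdd_below ((\<lambda>Q. \<integral>x. Q x * V x \<partial>M) ` C)"
proof -
  have [measurable]: "V \<in> borel_measurable M"
    using V unfolding L1s_def by auto
  obtain n :: nat
    where tail: "\<And>Q. Q \<in> C \<Longrightarrow> (\<integral>x. Q x * (\<bar>V x\<bar> * indicator {x. \<bar>V x\<bar> > real n} x) \<partial>M) \<le> 1"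
    using L1s_tail_le[OF V C zero_less_one] by blast
  have "- (real n + 1) \<le> (\<integral>x. Q x * V x \<partial>M)" if "Q \<in> C" for Q
  proof -
    note Q = densD[of Q M, OF subsetD[OF C that]]
    have "(\<integral>x. \<bar>Q x\<bar> \<partial>M) = (\<integral>x. Q x \<partial>M)"
      using Q(1,2) by (intro integral_cong_AE) (auto elim!: eventually_mono)
    moreover have "\<bar>(\<integral>x. Q x * V x \<partial>M) - (\<integral>x. 0 * V x \<partial>M)\<bar>
        \<le> real n * (\<integral>x. \<bar>Q x - 0\<bar> \<partial>M) + (\<integral>x. Q x * (\<bar>V x\<bar> * indicator {x. \<bar>V x\<bar> > real n} x) \<partial>M)
          + (\<integral>x. 0 * (\<bar>V x\<bar> * indicator {x. \<bar>V x\<bar> > real n} x) \<partial>M)"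
      using Q L1s_integrable[OF V C that] by (intro integral_mult_diff_le_truncation) auto
    ultimately show ?thesis
      using tail[OF that] Q(4) by simp
  qed
  then show ?thesis
    by (intro bdd_belowI2)
qed

lemma L1s_EQ_eq_integral:
  assumes "V \<in> L1s M C" "C \<subseteq> dens M" "Q \<in> C"
  shows "EQ M Q V = ereal (\<integral>x. Q x * V x \<partial>M)"
  using assms densD[of Q M] L1s_integrable[OF assms] unfolding L1s_def by (intro EQ_eq_integral) auto

lemma L1s_integral_tendsto:
  assumes V: "V \<in> L1s M C" and C: "C \<subseteq> dens M"
    and Qs: "\<And>k. Qs k \<in> C" and Q: "Q \<in> C" and lim: "(\<lambda>k. \<integral>x. \<bar>Qs k x - Q x\<bar> \<partial>M) \<longlonglongrightarrow> 0"
  shows "(\<lambda>k. \<integral>x. Qs k x * V x \<partial>M) \<longlonglongrightarrow> (\<integral>x. Q x * V x \<partial>M)"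
proof (rule LIMSEQ_I)
  fix \<epsilon> :: real assume "0 < \<epsilon>"
  have [measurable]: "V \<in> borel_measurable M"
    using V unfolding L1s_def by auto
  have "0 < \<epsilon> / 4"
    using \<open>0 < \<epsilon>\<close> by simp
  then obtain n :: nat
    where tail: "\<And>Q. Q \<in> C \<Longrightarrow> (\<integral>x. Q x * (\<bar>V x\<bar> * indicator {x. \<bar>V x\<bar> > real n} x) \<partial>M) \<le> \<epsilon> / 4"
    using L1s_tail_le[OF V C] by blast
  have "\<epsilon> / (4 * (real n + 1)) > 0"
    using \<open>0 < \<epsilon>\<close> by simp
  from order_tendstoD(2)[OF lim this]
  obtain N where N: "\<And>k. N \<le> k \<Longrightarrow> (\<integral>x. \<bar>Qs k x - Q x\<bar> \<partial>M) < \<epsilon> / (4 * (real n + 1))"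
    by (auto simp: eventually_sequentially)
  have "norm ((\<integral>x. Qs k x * V x \<partial>M) - (\<integral>x. Q x * V x \<partial>M)) < \<epsilon>" if "N \<le> k" for k
  proof -
    have "real n * (\<integral>x. \<bar>Qs k x - Q x\<bar> \<partial>M) \<le> (real n + 1) * (\<integral>x. \<bar>Qs k x - Q x\<bar> \<partial>M)"
      by (intro mult_right_mono) auto
    also have "\<dots> < (real n + 1) * (\<epsilon> / (4 * (real n + 1)))"
      using N[OF that] by (intro mult_strict_left_mono) auto
    also have "\<dots> = \<epsilon> / 4"
      by (simp add: field_simps)
    finally have "real n * (\<integral>x. \<bar>Qs k x - Q x\<bar> \<partial>M) < \<epsilon> / 4" .
    moreover have "\<bar>(\<integral>x. Qs k x * V x \<partial>M) - (\<integral>x. Q x * V x \<partial>M)\<bar>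
      \<le> real n * (\<integral>x. \<bar>Qs k x - Q x\<bar> \<partial>M)
        + (\<integral>x. Qs k x * (\<bar>V x\<bar> * indicator {x. \<bar>V x\<bar> > real n} x) \<partial>M)
        + (\<integral>x. Q x * (\<bar>V x\<bar> * indicator {x. \<bar>V x\<bar> > real n} x) \<partial>M)"
      using densD[of "Qs k" M] densD[of Q M] Qs[of k] Q C L1s_integrable[OF V C]
      by (intro integral_mult_diff_le_truncation) auto
    ultimately show ?thesis
      using tail[OF Qs[of k]] tail[OF Q] \<open>0 < \<epsilon>\<close> unfolding real_norm_def by linarith
  qed
  then show "\<exists>N. \<forall>k\<ge>N. norm ((\<integral>x. Qs k x * V x \<partial>M) - (\<integral>x. Q x * V x \<partial>M)) < \<epsilon>"
    by blast
qed

section \<open>Right derivative of an infimum of affine functions\<close>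

definition orthant_closed :: "'i set \<Rightarrow> ('i \<Rightarrow> real) \<Rightarrow> ('i \<Rightarrow> real) \<Rightarrow> bool" where
  "orthant_closed C g h \<longleftrightarrow>
     (\<forall>a b. (\<forall>\<epsilon>>0. \<exists>Q\<in>C. g Q \<le> a + \<epsilon> \<and> h Q \<le> b + \<epsilon>) \<longrightarrow> (\<exists>Q\<in>C. g Q \<le> a \<and> h Q \<le> b))"

lemma bdd_below_affine_image:
  fixes g h :: "'i \<Rightarrow> real"
  assumes "bdd_below (g ` C)" "bdd_below (h ` C)" "0 \<le> e"
  shows "bdd_below ((\<lambda>Q. g Q + e * h Q) ` C)"
proof -
  obtain mg mh where "\<And>Q. Q \<in> C \<Longrightarrow> mg \<le> g Q" "\<And>Q. Q \<in> C \<Longrightarrow> mh \<le> h Q"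
    using assms(1,2) unfolding bdd_below_def by auto
  then have "mg + e * mh \<le> g Q + e * h Q" if "Q \<in> C" for Q
    using that assms(3) by (intro add_mono mult_left_mono) auto
  then show ?thesis
    by (intro bdd_belowI2) auto
qed

lemma Inf_affine_quotient_le:
  fixes g h :: "'i \<Rightarrow> real"
  assumes "bdd_below ((\<lambda>Q. g Q + e * h Q) ` C)" "e > 0"
  shows "ereal ((Inf ((\<lambda>Q. g Q + e * h Q) ` C) - Inf (g ` C)) / e)
    \<le> (INF Q\<in>{Q\<in>C. g Q = Inf (g ` C)}. ereal (h Q))"
proof (rule INF_greatest)
  fix Q assume Q: "Q \<in> {Q\<in>C. g Q = Inf (g ` C)}"
  then have "Q \<in> C"
    by simp
  then have "Inf ((\<lambda>Q. g Q + e * h Q) ` C) \<le> g Q + e * h Q"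
    using assms(1) by (intro cInf_lower) auto
  then have "Inf ((\<lambda>Q. g Q + e * h Q) ` C) \<le> Inf (g ` C) + e * h Q"
    using Q by simp
  then show "ereal ((Inf ((\<lambda>Q. g Q + e * h Q) ` C) - Inf (g ` C)) / e) \<le> ereal (h Q)"
    using assms(2) by (simp add: pos_divide_le_eq mult.commute)
qed

lemma Inf_affine_near_minimizer:
  fixes g h :: "'i \<Rightarrow> real"
  assumes "C \<noteq> {}" "bdd_below (g ` C)" and h_ge: "\<And>Q. Q \<in> C \<Longrightarrow> \<beta> \<le> h Q"
    and "e > 0" "\<epsilon> > 0" and Inf_le: "Inf ((\<lambda>Q. g Q + e * h Q) ` C) \<le> Inf (g ` C) + e * c"
  shows "\<exists>Q\<in>C. g Q < Inf (g ` C) + e * (\<bar>c\<bar> + \<epsilon> + \<bar>\<beta>\<bar>) \<and> h Q < c + \<epsilon>"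
proof -
  have "bdd_below (h ` C)"
    using h_ge by (intro bdd_belowI2)
  then have "bdd_below ((\<lambda>Q. g Q + e * h Q) ` C)"
    using bdd_below_affine_image[OF assms(2)] \<open>e > 0\<close> by simp
  then obtain Q where "Q \<in> C" and Q: "g Q + e * h Q < Inf ((\<lambda>Q. g Q + e * h Q) ` C) + e * \<epsilon>"
    using cInf_lessD[of "(\<lambda>Q. g Q + e * h Q) ` C"] assms(1) \<open>e > 0\<close> \<open>\<epsilon> > 0\<close> by force
  have "Inf (g ` C) \<le> g Q"
    using assms(2) \<open>Q \<in> C\<close> by (intro cInf_lower) auto
  then have "e * h Q < e * (c + \<epsilon>)" and "g Q < Inf (g ` C) + e * (c + \<epsilon> - h Q)"
    using Q Inf_le by (simp_all add: algebra_simps)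
  then have "h Q < c + \<epsilon>"
    using \<open>e > 0\<close> by simp
  note \<open>g Q < Inf (g ` C) + e * (c + \<epsilon> - h Q)\<close>
  also have "Inf (g ` C) + e * (c + \<epsilon> - h Q) \<le> Inf (g ` C) + e * (\<bar>c\<bar> + \<epsilon> + \<bar>\<beta>\<bar>)"
    using h_ge[OF \<open>Q \<in> C\<close>] \<open>e > 0\<close> by (intro add_left_mono mult_left_mono) auto
  finally show ?thesis
    using \<open>Q \<in> C\<close> \<open>h Q < c + \<epsilon>\<close> by blast
qed

lemma Inf_affine_quotient_eventually_gt:
  fixes g h :: "'i \<Rightarrow> real"
  assumes "C \<noteq> {}" "bdd_below (g ` C)" and h_ge: "\<And>Q. Q \<in> C \<Longrightarrow> \<beta> \<le> h Q"
    and closed: "orthant_closed C g h"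
    and c: "ereal c < (INF Q\<in>{Q\<in>C. g Q = Inf (g ` C)}. ereal (h Q))"
  shows "\<forall>\<^sub>F e in at_right 0. c < (Inf ((\<lambda>Q. g Q + e * h Q) ` C) - Inf (g ` C)) / e"
proof (rule ccontr)
  define m where "m = Inf (g ` C)"
  assume not_eventually: "\<not> ?thesis"
  have frequently: "\<exists>e>0. e < \<delta> \<and> Inf ((\<lambda>Q. g Q + e * h Q) ` C) \<le> m + e * c" if \<delta>: "\<delta> > 0" for \<delta>
  proof -
    obtain e where "e > 0" "e < \<delta>" "(Inf ((\<lambda>Q. g Q + e * h Q) ` C) - m) / e \<le> c"
      using not_eventually \<delta> unfolding eventually_at_right_field m_def by (meson not_less)
    then show ?thesis
      by (intro exI[of _ e]) (simp add: pos_divide_le_eq mult.commute)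
  qed
  have "\<exists>Q\<in>C. g Q \<le> m + \<epsilon> \<and> h Q \<le> c + \<epsilon>" if "\<epsilon> > 0" for \<epsilon>
  proof -
    define R where "R = \<bar>c\<bar> + \<epsilon> + \<bar>\<beta>\<bar>"
    have "R + 1 > 0"
      unfolding R_def using \<open>\<epsilon> > 0\<close> by simp
    then obtain e where "e > 0" "e < \<epsilon> / (R + 1)" and Inf_le: "Inf ((\<lambda>Q. g Q + e * h Q) ` C) \<le> m + e * c"
      using frequently[of "\<epsilon> / (R + 1)"] \<open>\<epsilon> > 0\<close> by auto
    obtain Q where "Q \<in> C" "g Q < m + e * R" "h Q < c + \<epsilon>"
      using Inf_affine_near_minimizer[where \<beta>=\<beta>, OF assms(1,2) h_ge \<open>e > 0\<close> \<open>\<epsilon> > 0\<close> Inf_le[unfolded m_def]]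
      unfolding m_def R_def by blast
    have "e * R \<le> e * (R + 1)"
      using \<open>e > 0\<close> by simp
    also have "\<dots> < \<epsilon>"
      using \<open>e < \<epsilon> / (R + 1)\<close> \<open>R + 1 > 0\<close> by (simp add: pos_less_divide_eq mult.commute)
    finally show ?thesis
      using \<open>Q \<in> C\<close> \<open>g Q < m + e * R\<close> \<open>h Q < c + \<epsilon>\<close> by (intro bexI[of _ Q]) auto
  qed
  then obtain Q where "Q \<in> C" "g Q \<le> m" "h Q \<le> c"
    using closed unfolding orthant_closed_def by blast
  moreover have "m \<le> g Q"
    unfolding m_def using assms(2) \<open>Q \<in> C\<close> by (intro cInf_lower) auto
  ultimately have "(INF Q\<in>{Q\<in>C. g Q = Inf (g ` C)}. ereal (h Q)) \<le> ereal c"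
    unfolding m_def by (intro INF_lower2[of Q]) auto
  with c show False
    by simp
qed

lemma Inf_affine_right_derivative:
  fixes g h :: "'i \<Rightarrow> real"
  assumes "C \<noteq> {}" "bdd_below (g ` C)" "bdd_below (h ` C)"
    and closed: "orthant_closed C g h"
  shows "((\<lambda>e. ereal ((Inf ((\<lambda>Q. g Q + e * h Q) ` C) - Inf (g ` C)) / e))
    \<longlongrightarrow> (INF Q\<in>{Q\<in>C. g Q = Inf (g ` C)}. ereal (h Q))) (at_right 0)"
proof (rule order_tendstoI)
  fix a assume less_a: "(INF Q\<in>{Q\<in>C. g Q = Inf (g ` C)}. ereal (h Q)) < a"
  have "\<forall>\<^sub>F e in at_right 0. (0::real) < e"
    by (rule eventually_at_right_less)
  then show "\<forall>\<^sub>F e in at_right 0. ereal ((Inf ((\<lambda>Q. g Q + e * h Q) ` C) - Inf (g ` C)) / e) < a"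
  proof (rule eventually_mono)
    fix e :: real assume "0 < e"
    then have "ereal ((Inf ((\<lambda>Q. g Q + e * h Q) ` C) - Inf (g ` C)) / e)
        \<le> (INF Q\<in>{Q\<in>C. g Q = Inf (g ` C)}. ereal (h Q))"
      by (intro Inf_affine_quotient_le bdd_below_affine_image assms(2,3)) auto
    then show "ereal ((Inf ((\<lambda>Q. g Q + e * h Q) ` C) - Inf (g ` C)) / e) < a"
      using less_a by (rule le_less_trans)
  qed
next
  fix a assume a: "a < (INF Q\<in>{Q\<in>C. g Q = Inf (g ` C)}. ereal (h Q))"
  obtain \<beta> where "\<And>Q. Q \<in> C \<Longrightarrow> \<beta> \<le> h Q"
    using assms(3) unfolding bdd_below_def by auto
  then show "\<forall>\<^sub>F e in at_right 0. a < ereal ((Inf ((\<lambda>Q. g Q + e * h Q) ` C) - Inf (g ` C)) / e)"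
    using a Inf_affine_quotient_eventually_gt[OF assms(1,2) _ closed]
    by (cases a) (auto elim!: eventually_mono)
qed

section \<open>Conditional expectation given Y\<close>

context sigma_finite_subalgebra
begin

lemma abs_real_cond_exp_le:
  assumes "integrable M f"
  shows "AE x in M. \<bar>real_cond_exp M F f x\<bar> \<le> real_cond_exp M F (\<lambda>x. \<bar>f x\<bar>) x"
proof -
  have "AE x in M. real_cond_exp M F f x \<le> real_cond_exp M F (\<lambda>x. \<bar>f x\<bar>) x"
    "AE x in M. real_cond_exp M F (\<lambda>x. - f x) x \<le> real_cond_exp M F (\<lambda>x. \<bar>f x\<bar>) x"
    using assms by (intro real_cond_exp_mono; auto)+
  moreover have "AE x in M. real_cond_exp M F (\<lambda>x. (-1) * f x) x = (-1) * real_cond_exp M F f x"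
    using assms by (rule real_cond_exp_cmult)
  ultimately show ?thesis
    by eventually_elim auto
qed

lemma real_cond_exp_L1_contraction:
  assumes "integrable M a" "integrable M b"
  shows "(\<integral>x. \<bar>real_cond_exp M F a x - real_cond_exp M F b x\<bar> \<partial>M) \<le> (\<integral>x. \<bar>a x - b x\<bar> \<partial>M)"
proof -
  have ab: "integrable M (\<lambda>x. a x - b x)"
    using assms by auto
  have "AE x in M. \<bar>real_cond_exp M F a x - real_cond_exp M F b x\<bar> \<le> real_cond_exp M F (\<lambda>x. \<bar>a x - b x\<bar>) x"
    using real_cond_exp_diff[OF assms] abs_real_cond_exp_le[OF ab] by eventually_elim auto
  then have "(\<integral>x. \<bar>real_cond_exp M F a x - real_cond_exp M F b x\<bar> \<partial>M) \<le> (\<integral>x. real_cond_exp M F (\<lambda>x. \<bar>a x - b x\<bar>) x \<partial>M)"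
    using assms ab real_cond_exp_int(1) by (intro integral_mono_AE) auto
  also have "\<dots> = (\<integral>x. \<bar>a x - b x\<bar> \<partial>M)"
    using ab by (intro real_cond_exp_int(2)) auto
  finally show ?thesis .
qed

lemma integral_real_cond_exp_midpoint_mult:
  assumes "integrable M a" "integrable M b" and [measurable]: "V \<in> borel_measurable M"
    and "integrable M (\<lambda>x. real_cond_exp M F a x * V x)" "integrable M (\<lambda>x. real_cond_exp M F b x * V x)"
  shows "(\<integral>x. real_cond_exp M F (\<lambda>x. (a x + b x) / 2) x * V x \<partial>M)
       = ((\<integral>x. real_cond_exp M F a x * V x \<partial>M) + (\<integral>x. real_cond_exp M F b x * V x \<partial>M)) / 2"
proof -
  have "AE x in M. real_cond_exp M F (\<lambda>x. (a x + b x) / 2) x = real_cond_exp M F (\<lambda>x. a x + b x) x / 2"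
    using assms(1,2) by (intro real_cond_exp_cdiv) auto
  moreover have "AE x in M. real_cond_exp M F (\<lambda>x. a x + b x) x = real_cond_exp M F a x + real_cond_exp M F b x"
    using assms(1,2) by (rule real_cond_exp_add)
  ultimately have ae: "AE x in M. real_cond_exp M F (\<lambda>x. (a x + b x) / 2) x * V x
      = (real_cond_exp M F a x * V x + real_cond_exp M F b x * V x) / 2"
    by eventually_elim (simp add: algebra_simps)
  have "(\<integral>x. real_cond_exp M F (\<lambda>x. (a x + b x) / 2) x * V x \<partial>M)
      = (\<integral>x. (real_cond_exp M F a x * V x + real_cond_exp M F b x * V x) / 2 \<partial>M)"
    by (rule integral_cong_AE[OF _ _ ae]) (measurable, measurable)
  also have "\<dots> = ((\<integral>x. real_cond_exp M F a x * V x \<partial>M) + (\<integral>x. real_cond_exp M F b x * V x \<partial>M)) / 2"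
    using assms(4,5) by simp
  finally show ?thesis .
qed

end

abbreviation cond_exp_given :: "'a measure \<Rightarrow> ('a \<Rightarrow> 'b::euclidean_space) \<Rightarrow> ('a \<Rightarrow> real) \<Rightarrow> 'a \<Rightarrow> real" where
  "cond_exp_given M Y Z \<equiv> real_cond_exp M (vimage_algebra (space M) Y borel) Z"

lemma finite_measure_subalgebra_vimage:
  assumes "finite_measure M" "Y \<in> borel_measurable M"
  shows "finite_measure_subalgebra M (vimage_algebra (space M) Y borel)"
proof -
  have "subalgebra M (vimage_algebra (space M) Y borel)"
    unfolding subalgebra_def using measurable_iff_sets[of Y M borel] assms(2) by auto
  with assms(1) show ?thesis
    by (simp add: finite_measure_subalgebra_axioms_def finite_measure_subalgebra_def)
qed

lemma cond_set_subset_dens: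
  assumes "finite_measure M" "Y \<in> borel_measurable M" "D \<subseteq> dens M"
  shows "cond_set M D Y \<subseteq> dens M"
proof -
  interpret finite_measure_subalgebra M "vimage_algebra (space M) Y borel"
    using finite_measure_subalgebra_vimage[OF assms(1,2)] .
  show ?thesis
  proof
    fix Q assume "Q \<in> cond_set M D Y"
    then obtain Z where "Z \<in> D" and Q: "Q = cond_exp_given M Y Z"
      unfolding cond_set_def by blast
    then have "Z \<in> dens M"
      using assms(3) by blast
    note Z = densD[OF this]
    show "Q \<in> dens M"
      unfolding dens_def Q using real_cond_exp_pos[OF Z(2,1)] real_cond_exp_int[OF Z(3)] Z(4) by auto
  qed
qed

lemma cond_exp_given_integral_midpoint:
  assumes "finite_measure M" "Y \<in> borel_measurable M" "D \<subseteq> dens M" "V \<in> L1s M (cond_set M D Y)"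
    and "a \<in> D" "b \<in> D"
  shows "(\<integral>x. cond_exp_given M Y (\<lambda>x. (a x + b x) / 2) x * V x \<partial>M)
    = ((\<integral>x. cond_exp_given M Y a x * V x \<partial>M) + (\<integral>x. cond_exp_given M Y b x * V x \<partial>M)) / 2"
proof -
  interpret finite_measure_subalgebra M "vimage_algebra (space M) Y borel"
    using finite_measure_subalgebra_vimage[OF assms(1,2)] .
  note int = L1s_integrable[OF assms(4) cond_set_subset_dens[OF assms(1-3)]]
  show ?thesis
    using assms(3-6) densD(3) L1s_def int unfolding cond_set_def
    by (intro integral_real_cond_exp_midpoint_mult) blast+
qed

lemma cond_exp_given_integral_tendsto:
  assumes "finite_measure M" "Y \<in> borel_measurable M" "D \<subseteq> dens M" "V \<in> L1s M (cond_set M D Y)"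
    and Zs: "\<And>k. Zs k \<in> D" and Z: "Z \<in> D" and lim: "(\<lambda>k. \<integral>x. \<bar>Zs k x - Z x\<bar> \<partial>M) \<longlonglongrightarrow> 0"
  shows "(\<lambda>k. \<integral>x. cond_exp_given M Y (Zs k) x * V x \<partial>M) \<longlonglongrightarrow> (\<integral>x. cond_exp_given M Y Z x * V x \<partial>M)"
proof (rule L1s_integral_tendsto[OF assms(4) cond_set_subset_dens[OF assms(1-3)]])
  interpret finite_measure_subalgebra M "vimage_algebra (space M) Y borel"
    using finite_measure_subalgebra_vimage[OF assms(1,2)] .
  show "cond_exp_given M Y (Zs k) \<in> cond_set M D Y" for k
    unfolding cond_set_def using Zs by blast
  show "cond_exp_given M Y Z \<in> cond_set M D Y"
    unfolding cond_set_def using Z by blast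
  show "(\<lambda>k. \<integral>x. \<bar>cond_exp_given M Y (Zs k) x - cond_exp_given M Y Z x\<bar> \<partial>M) \<longlonglongrightarrow> 0"
  proof (rule tendsto_sandwich[OF _ _ tendsto_const lim])
    show "\<forall>\<^sub>F k in sequentially. (\<integral>x. \<bar>cond_exp_given M Y (Zs k) x - cond_exp_given M Y Z x\<bar> \<partial>M)
        \<le> (\<integral>x. \<bar>Zs k x - Z x\<bar> \<partial>M)"
      using Zs Z assms(3) densD(3) by (intro always_eventually allI real_cond_exp_L1_contraction) blast+
  qed auto
qed

section \<open>The factor utility contribution\<close>

lemma determining_set_subset_dens: "determining_set M u \<subseteq> dens M"
  unfolding determining_set_def by auto

lemma determining_set_nonempty:
  assumes "coherent_utility M u"
  shows "determining_set M u \<noteq> {}"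
proof -
  obtain D0 where "D0 \<noteq> {}" "D0 \<subseteq> dens M" "\<And>X. X \<in> borel_measurable M \<Longrightarrow> u X = (INF Q\<in>D0. EQ M Q X)"
    using assms unfolding coherent_utility_def by blast
  then have "D0 \<subseteq> determining_set M u"
    unfolding determining_set_def by (auto intro: INF_lower)
  with \<open>D0 \<noteq> {}\<close> show ?thesis
    by blast
qed

lemma midpoint_convex_determining_set: "midpoint_convex (determining_set M u)"
  unfolding midpoint_convex_def
proof (intro ballI)
  fix a b assume "a \<in> determining_set M u" "b \<in> determining_set M u"
  then have a: "a \<in> dens M" "\<And>X. X \<in> borel_measurable M \<Longrightarrow> u X \<le> EQ M a X"
    and b: "b \<in> dens M" "\<And>X. X \<in> borel_measurable M \<Longrightarrow> u X \<le> EQ M b X"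
    unfolding determining_set_def by auto
  have "(\<lambda>x. (a x + b x) / 2) \<in> dens M"
    using densD[OF a(1)] densD[OF b(1)] unfolding dens_def by auto
  moreover have "u X \<le> EQ M (\<lambda>x. (a x + b x) / 2) X" if "X \<in> borel_measurable M" for X
    using a(2)[OF that] b(2)[OF that] EQ_midpoint_ge_min[OF densD(1)[OF a(1)] densD(1)[OF b(1)] that
        densD(2)[OF a(1)] densD(2)[OF b(1)]]
    by (meson min.bounded_iff order_trans)
  ultimately show "(\<lambda>x. (a x + b x) / 2) \<in> determining_set M u"
    unfolding determining_set_def by blast
qed

lemma orthant_closed_cond_set:
  assumes "prob_space M" "Y \<in> borel_measurable M"
    and D: "D \<subseteq> dens M" "L1_closed M D" "unif_integrable M D" "midpoint_convex D"
    and W: "W \<in> L1s M (cond_set M D Y)" and X: "X \<in> L1s M (cond_set M D Y)"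
  shows "orthant_closed (cond_set M D Y) (\<lambda>Q. \<integral>x. Q x * W x \<partial>M) (\<lambda>Q. \<integral>x. Q x * X x \<partial>M)"
  unfolding orthant_closed_def
proof (intro allI impI)
  fix a b
  assume approx: "\<forall>\<epsilon>>0. \<exists>Q\<in>cond_set M D Y. (\<integral>x. Q x * W x \<partial>M) \<le> a + \<epsilon> \<and> (\<integral>x. Q x * X x \<partial>M) \<le> b + \<epsilon>"
  interpret prob_space M
    by (rule assms(1))
  define g where "g V Z = (\<integral>x. cond_exp_given M Y Z x * V x \<partial>M)" for V Z
  define f where "f Z = max (g W Z - a) (g X Z - b)" for Z
  note midpoint = cond_exp_given_integral_midpoint[OF finite_measure_axioms assms(2) D(1)]
  note tendsto = cond_exp_given_integral_tendsto[OF finite_measure_axioms assms(2) D(1)]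
  have "\<exists>Z\<in>D. f Z \<le> 0"
  proof (rule convex_lsc_le_attained[OF D])
    fix Z1 Z2 assume "Z1 \<in> D" "Z2 \<in> D"
    then show "f (\<lambda>x. (Z1 x + Z2 x) / 2) \<le> (f Z1 + f Z2) / 2"
      using midpoint[OF W] midpoint[OF X] unfolding f_def g_def by (simp add: max_def field_simps)
  next
    fix Zs Z c
    assume Zs: "\<And>k. Zs k \<in> D" and Z: "Z \<in> D" and lim: "(\<lambda>k. \<integral>x. \<bar>Zs k x - Z x\<bar> \<partial>M) \<longlonglongrightarrow> 0"
      and le: "\<And>k. f (Zs k) \<le> c"
    have "g W (Zs k) \<le> a + c" "g X (Zs k) \<le> b + c" for k
      using le[of k] unfolding f_def by auto
    then have "g W Z \<le> a + c" "g X Z \<le> b + c"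
      unfolding g_def by (intro LIMSEQ_le_const2[OF tendsto[OF W Zs Z lim]] LIMSEQ_le_const2[OF tendsto[OF X Zs Z lim]]; blast)+
    then show "f Z \<le> c"
      unfolding f_def by simp
  next
    fix \<epsilon> :: real assume "\<epsilon> > 0"
    then obtain Z where "Z \<in> D" "g W Z \<le> a + \<epsilon>" "g X Z \<le> b + \<epsilon>"
      using approx unfolding cond_set_def g_def by blast
    then show "\<exists>Z\<in>D. f Z \<le> \<epsilon>"
      unfolding f_def by (intro bexI[of _ Z]) auto
  qed
  then show "\<exists>Q\<in>cond_set M D Y. (\<integral>x. Q x * W x \<partial>M) \<le> a \<and> (\<integral>x. Q x * X x \<partial>M) \<le> b"
    unfolding cond_set_def f_def g_def by fastforce
qed

lemma uf_affine_eq_Inf: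
  assumes "finite_measure M" "Y \<in> borel_measurable M" "D \<subseteq> dens M" "D \<noteq> {}"
    and W: "W \<in> L1s M (cond_set M D Y)" and X: "X \<in> L1s M (cond_set M D Y)" and "0 \<le> e"
  shows "uf M D (\<lambda>x. W x + e * X x) Y
    = ereal (Inf ((\<lambda>Q. (\<integral>x. Q x * W x \<partial>M) + e * (\<integral>x. Q x * X x \<partial>M)) ` cond_set M D Y))"
proof -
  have C: "cond_set M D Y \<subseteq> dens M" "cond_set M D Y \<noteq> {}"
    using cond_set_subset_dens[OF assms(1-3)] assms(4) unfolding cond_set_def by auto
  have "EQ M Q (\<lambda>x. W x + e * X x) = ereal ((\<integral>x. Q x * W x \<partial>M) + e * (\<integral>x. Q x * X x \<partial>M))"
    if "Q \<in> cond_set M D Y" for Q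
  proof -
    have int: "integrable M (\<lambda>x. Q x * W x)" "integrable M (\<lambda>x. Q x * X x)"
      using L1s_integrable[OF W C(1) that] L1s_integrable[OF X C(1) that] .
    then have "EQ M Q (\<lambda>x. W x + e * X x) = ereal (\<integral>x. Q x * W x + e * (Q x * X x) \<partial>M)"
      using W X C(1) that densD[of Q M] unfolding L1s_def
      by (subst EQ_eq_integral) (auto simp: algebra_simps)
    then show ?thesis
      using int by simp
  qed
  then have "uf M D (\<lambda>x. W x + e * X x) Y
      = (INF Q\<in>cond_set M D Y. ereal ((\<integral>x. Q x * W x \<partial>M) + e * (\<integral>x. Q x * X x \<partial>M)))"
    unfolding uf_def by (rule INF_cong[OF refl])
  also have "\<dots> = ereal (Inf ((\<lambda>Q. (\<integral>x. Q x * W x \<partial>M) + e * (\<integral>x. Q x * X x \<partial>M)) ` cond_set M D Y))"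
    using bdd_below_affine_image[OF L1s_bdd_below[OF W C(1)] L1s_bdd_below[OF X C(1)] \<open>0 \<le> e\<close>] C(2)
    by (subst ereal_Inf') (auto simp: image_image)
  finally show ?thesis .
qed

lemma ufc_eq_INF:
  assumes "finite_measure M" "Y \<in> borel_measurable M" "D \<subseteq> dens M" "D \<noteq> {}"
    and W: "W \<in> L1s M (cond_set M D Y)" and X: "X \<in> L1s M (cond_set M D Y)"
  shows "ufc M D X Y W = (INF Q\<in>{Q \<in> cond_set M D Y.
      (\<integral>x. Q x * W x \<partial>M) = Inf ((\<lambda>Q. \<integral>x. Q x * W x \<partial>M) ` cond_set M D Y)}. ereal (\<integral>x. Q x * X x \<partial>M))"
proof -
  have C: "cond_set M D Y \<subseteq> dens M"
    using cond_set_subset_dens[OF assms(1-3)] .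
  have "uf M D W Y = ereal (Inf ((\<lambda>Q. \<integral>x. Q x * W x \<partial>M) ` cond_set M D Y))"
    using uf_affine_eq_Inf[OF assms, of 0] by simp
  then have "extreme_set M D Y W
      = {Q \<in> cond_set M D Y. (\<integral>x. Q x * W x \<partial>M) = Inf ((\<lambda>Q. \<integral>x. Q x * W x \<partial>M) ` cond_set M D Y)}"
    unfolding extreme_set_def using L1s_EQ_eq_integral[OF W C] by auto
  then show ?thesis
    unfolding ufc_def using L1s_EQ_eq_integral[OF X C] by (intro INF_cong) auto
qed

theorem corollary6p4:
  fixes M :: "'a measure" and u :: "('a \<Rightarrow> real) \<Rightarrow> ereal"
    and Y :: "'a \<Rightarrow> 'b::euclidean_space" and X W :: "'a \<Rightarrow> real"
  defines "D \<equiv> determining_set M u"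
  assumes "prob_space M"
    and "coherent_utility M u"
    and "L1_closed M D"
    and "unif_integrable M D"
    and "Y \<in> borel_measurable M"
    and "X \<in> L1s M D \<inter> L1s M (cond_set M D Y)" and "integrable M X"
    and "W \<in> L1s M D \<inter> L1s M (cond_set M D Y)" and "integrable M W"
  shows "((\<lambda>\<epsilon>::real. (uf M D (\<lambda>x. W x + \<epsilon> * X x) Y - uf M D W Y) / ereal \<epsilon>)
           \<longlongrightarrow> ufc M D X Y W) (at_right 0)"
proof -
  interpret prob_space M
    by (rule assms(2))
  have D: "D \<subseteq> dens M" "D \<noteq> {}" "midpoint_convex D"
    unfolding D_def by (rule determining_set_subset_dens determining_set_nonempty[OF assms(3)]
      midpoint_convex_determining_set)+
  (* Only the L^1_s(E(D | Y)) part of the hypotheses on X and W is needed. *)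
  have W: "W \<in> L1s M (cond_set M D Y)" and X: "X \<in> L1s M (cond_set M D Y)"
    using assms(7,9) by auto
  have C: "cond_set M D Y \<subseteq> dens M" "cond_set M D Y \<noteq> {}"
    using cond_set_subset_dens[OF finite_measure_axioms assms(6) D(1)] D(2) unfolding cond_set_def by auto
  note uf_eq = uf_affine_eq_Inf[OF finite_measure_axioms assms(6) D(1,2) W X]
  have quotient_eq: "\<forall>\<^sub>F \<epsilon> in at_right 0. (uf M D (\<lambda>x. W x + \<epsilon> * X x) Y - uf M D W Y) / ereal \<epsilon>
      = ereal ((Inf ((\<lambda>Q. (\<integral>x. Q x * W x \<partial>M) + \<epsilon> * (\<integral>x. Q x * X x \<partial>M)) ` cond_set M D Y)
        - Inf ((\<lambda>Q. \<integral>x. Q x * W x \<partial>M) ` cond_set M D Y)) / \<epsilon>)"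
    using eventually_at_right_less[of 0] by (rule eventually_mono) (use uf_eq[of 0] uf_eq in simp)
  show ?thesis
    unfolding ufc_eq_INF[OF finite_measure_axioms assms(6) D(1,2) W X] tendsto_cong[OF quotient_eq]
    by (rule Inf_affine_right_derivative[OF C(2) L1s_bdd_below[OF W C(1)] L1s_bdd_below[OF X C(1)]
          orthant_closed_cond_set[OF assms(2,6) D(1) assms(4,5) D(3) W X]])
qed

end
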